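(* Let $G$ be a subdivided $\Pi$-graph. Then every grain line $(L,\mathcal P)$ in $G$ is wild, i.e. $(L,\le_L)$ is order-isomorphic to $\mathbb{Q}\cap[0,1]$. In particular, in a subdivided $\Pi$-graph, every grain line can be chosen to be wildly presented: whenever $(L,(P_n)_{n\in\mathbb{N}})$ is an $x$–$y$ grain line in $G$, there is a subsequence $(P_{n_k})_{k\in\mathbb{N}}$ such that $(L,(P_{n_k})_{k\in\mathbb{N}})$ is a wildly presented $x$–$y$ grain line in $G$.
   Context: Graphs are simple and may be infinite; $\mathbb{N}=\{0,1,2,\dots\}$. A graph is infinitely edge-connected if it has at least two vertices and $G-E'$ is connected for every finite edge set $E'$. A $\Pi$-graph is an infinitely edge-connected graph that does not contain infinitely many internally vertex-disjoint paths between any two of its vertices. A subdivided $\Pi$-graph is a graph that is a subdivision of some $\Pi$-graph (each edge replaced by a path, new inner vertices added). An $x$–$y$ path $P$ induces the linear order $\le_P$ of traversal from $x$ to $y$ on $V(P)$. For distinct vertices $x,y$, an $x$–$y$ grain line in $G$ is a pair $(L,\mathcal P)$ where $L\subseteq V(G)$ is a countable set with a linear order $\le_L$ having least element $x$ and greatest element $y$, and $\mathcal P=(P_n)_{n\in\mathbb{N}}$ is a sequence of pairwise edge-disjoint $x$–$y$ paths in $G$, such that: (GL1) $L$ is exactly the set of vertices $v$ for which $\{n: v\in V(P_n)\}$ is a non-empty final segment $\{n:n\ge m\}$ of $\mathbb{N}$; (GL2) if a vertex of $P_n$ is not in $L$, it lies on no $P_m$ with $m\ne n$; (GL3) for every $n$,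 $\le_{P_n}$ and $\le_L$ induce the same linear order on $L_{<n}:=L\cap\bigcup_{k<n}V(P_k)$. A grain line is wild if $(L,\le_L)$ is order-isomorphic to $\mathbb{Q}\cap[0,1]$. It is wildly presented if for every $n$ and all $\ell_1<_L\ell_2$ in $L_{<n}$, the subpath $\ell_1P_n\ell_2$ of $P_n$ has a vertex in the open interval $(\ell_1,\ell_2)_L=\{\ell\in L:\ell_1<_L\ell<_L\ell_2\}$. *)

theory Defs
  imports Main "HOL-Library.Countable_Set"
begin

type_synonym 'a graph = "'a set \<times> 'a set set"

abbreviation verts :: "'a graph \<Rightarrow> 'a set" where "verts G \<equiv> fst G"
abbreviation edges :: "'a graph \<Rightarrow> 'a set set" where "edges G \<equiv> snd G"

definition graph :: "'a graph \<Rightarrow> bool" where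
  "graph G \<longleftrightarrow> (\<forall>e\<in>edges G. \<exists>u v. u \<noteq> v \<and> e = {u, v} \<and> u \<in> verts G \<and> v \<in> verts G)"

definition path_edges :: "'a list \<Rightarrow> 'a set set" where
  "path_edges p = {{p ! i, p ! Suc i} | i. Suc i < length p}"

definition is_path :: "'a graph \<Rightarrow> 'a list \<Rightarrow> bool" where
  "is_path G p \<longleftrightarrow> p \<noteq> [] \<and> distinct p \<and> set p \<subseteq> verts G \<and> path_edges p \<subseteq> edges G"

definition xy_path :: "'a graph \<Rightarrow> 'a list \<Rightarrow> 'a \<Rightarrow> 'a \<Rightarrow> bool" where
  "xy_path G p x y \<longleftrightarrow> is_path G p \<and> hd p = x \<and> last p = y"

definition path_le :: "'a list \<Rightarrow> 'a \<Rightarrow> 'a \<Rightarrow> bool" where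
  "path_le p a b \<longleftrightarrow> (\<exists>i j. i \<le> j \<and> j < length p \<and> p ! i = a \<and> p ! j = b)"

definition subpath_verts :: "'a list \<Rightarrow> 'a \<Rightarrow> 'a \<Rightarrow> 'a set" where
  "subpath_verts p a b = {v. path_le p a v \<and> path_le p v b}"

definition inf_edge_connected :: "'a graph \<Rightarrow> bool" where
  "inf_edge_connected G \<longleftrightarrow>
     (\<exists>u v. u \<in> verts G \<and> v \<in> verts G \<and> u \<noteq> v) \<and>
     (\<forall>F. finite F \<longrightarrow>
        (\<forall>u\<in>verts G. \<forall>v\<in>verts G. \<exists>p. xy_path G p u v \<and> path_edges p \<inter> F = {}))"

definition Pi_graph :: "'a graph \<Rightarrow> bool" where
  "Pi_graph G \<longleftrightarrow> graph G \<and> inf_edge_connected G \<and>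
     \<not> (\<exists>u v P. u \<in> verts G \<and> v \<in> verts G \<and> u \<noteq> v \<and> inj P \<and>
           (\<forall>n::nat. xy_path G (P n) u v) \<and>
           (\<forall>i j. i \<noteq> j \<longrightarrow> set (P i) \<inter> set (P j) \<subseteq> {u, v}))"

definition subdivision_of :: "'a graph \<Rightarrow> 'a graph \<Rightarrow> bool" where
  "subdivision_of G H \<longleftrightarrow> verts H \<subseteq> verts G \<and>
     (\<exists>\<phi>. (\<forall>e\<in>edges H. \<exists>u v. e = {u, v} \<and> xy_path G (\<phi> e) u v \<and>
                              set (\<phi> e) \<inter> verts H = {u, v}) \<and>
          (\<forall>e\<in>edges H. \<forall>e'\<in>edges H. e \<noteq> e' \<longrightarrow> set (\<phi> e) \<inter> set (\<phi> e') \<subseteq> verts H) \<and>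
          verts G = verts H \<union> (\<Union>e\<in>edges H. set (\<phi> e)) \<and>
          edges G = (\<Union>e\<in>edges H. path_edges (\<phi> e)))"

definition subdivided_Pi_graph :: "'a graph \<Rightarrow> bool" where
  "subdivided_Pi_graph G \<longleftrightarrow> graph G \<and> (\<exists>H. Pi_graph H \<and> subdivision_of G H)"

definition L_lt :: "'a set \<Rightarrow> (nat \<Rightarrow> 'a list) \<Rightarrow> nat \<Rightarrow> 'a set" where
  "L_lt L P n = L \<inter> (\<Union>k<n. set (P k))"

definition grain_line :: "'a graph \<Rightarrow> 'a \<Rightarrow> 'a \<Rightarrow> 'a set \<Rightarrow> 'a rel \<Rightarrow> (nat \<Rightarrow> 'a list) \<Rightarrow> bool" where
  "grain_line G x y L r P \<longleftrightarrow>
     x \<noteq> y \<and> x \<in> verts G \<and> y \<in> verts G \<and>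
     L \<subseteq> verts G \<and> countable L \<and> linear_order_on L r \<and>
     x \<in> L \<and> (\<forall>l\<in>L. (x, l) \<in> r) \<and> y \<in> L \<and> (\<forall>l\<in>L. (l, y) \<in> r) \<and>
     (\<forall>n. xy_path G (P n) x y) \<and>
     (\<forall>i j. i \<noteq> j \<longrightarrow> path_edges (P i) \<inter> path_edges (P j) = {}) \<and>
     \<comment> \<open>(GL1)\<close>
     L = {v. \<exists>m. {n. v \<in> set (P n)} = {m..}} \<and>
     \<comment> \<open>(GL2)\<close>
     (\<forall>n v. v \<in> set (P n) \<and> v \<notin> L \<longrightarrow> (\<forall>m. m \<noteq> n \<longrightarrow> v \<notin> set (P m))) \<and>
     \<comment> \<open>(GL3)\<close>
     (\<forall>n. \<forall>a\<in>L_lt L P n. \<forall>b\<in>L_lt L P n. path_le (P n) a b \<longleftrightarrow> (a, b) \<in> r)"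

definition wild :: "'a set \<Rightarrow> 'a rel \<Rightarrow> bool" where
  "wild L r \<longleftrightarrow> (\<exists>f. bij_betw f L {q :: rat. 0 \<le> q \<and> q \<le> 1} \<and>
                     (\<forall>a\<in>L. \<forall>b\<in>L. (a, b) \<in> r \<longleftrightarrow> f a \<le> f b))"

definition wildly_presented :: "'a set \<Rightarrow> 'a rel \<Rightarrow> (nat \<Rightarrow> 'a list) \<Rightarrow> bool" where
  "wildly_presented L r P \<longleftrightarrow>
     (\<forall>n. \<forall>l1\<in>L_lt L P n. \<forall>l2\<in>L_lt L P n. (l1, l2) \<in> r \<and> l1 \<noteq> l2 \<longrightarrow>
        (\<exists>v\<in>subpath_verts (P n) l1 l2. v \<in> L \<and> (l1, v) \<in> r \<and> v \<noteq> l1 \<and> (v, l2) \<in> r \<and> v \<noteq> l2))"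

end

theory Submission
  imports Defs
begin

text \<open>A vertex of \<open>L\<close> lies on all but finitely many of the pairwise edge-disjoint paths
  \<open>P\<^sub>n\<close>, so it has infinite degree; subdividing vertices have finite degree, hence \<open>L\<close>
  consists of branch vertices of the underlying \<open>\<Pi>\<close>-graph \<open>H\<close>.

  Suppose \<open>a <\<^sub>L b\<close> with no vertex of \<open>L\<close> in between. For large \<open>n\<close> the segments
  \<open>a P\<^sub>n b\<close> have pairwise disjoint interiors: an inner vertex shared by two of the paths lies
  in \<open>L\<close> by (GL2), and then strictly between \<open>a\<close> and \<open>b\<close> by (GL3). Deleting their subdividing
  vertices gives \<open>a\<close>--\<open>b\<close> paths in \<open>H\<close> that pairwise meet only in \<open>a\<close> and \<open>b\<close>. Two of
  them can coincide only if both segments run inside the subdivided edge \<open>ab\<close>, and then they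
  share its first edge at \<open>a\<close>, which edge-disjointness forbids. So \<open>H\<close> would have infinitely
  many independent \<open>a\<close>--\<open>b\<close> paths.

  Hence \<open>(L, \<le>\<^sub>L)\<close> is a countable dense linear order with distinct endpoints, i.e. a copy of
  \<open>\<rat> \<inter> [0, 1]\<close> by Cantor's theorem. Density also yields the subsequence: choose
  \<open>ns (k + 1)\<close> so large that every pair in \<open>L_lt L P (ns k + 1)\<close> has a witness between
  them in \<open>L_lt L P (ns (k + 1))\<close>; by (GL3) the witness lies on the right subpath of
  \<open>P (ns (k + 1))\<close>.\<close>

section \<open>Countable dense linear orders\<close>

definition dense_order_on :: "'a set \<Rightarrow> 'a rel \<Rightarrow> bool" where
  "dense_order_on A r \<longleftrightarrow>
     (\<forall>a\<in>A. \<forall>b\<in>A. (a, b) \<in> r \<and> a \<noteq> b \<longrightarrow> (\<exists>c\<in>A. (a, c) \<in> r \<and> a \<noteq> c \<and> (c, b) \<in> r \<and> c \<noteq> b))"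

lemma linear_order_onD:
  assumes "linear_order_on A r"
  shows "a \<in> A \<Longrightarrow> (a, a) \<in> r" and "trans r" and "antisym r"
    and "a \<in> A \<Longrightarrow> b \<in> A \<Longrightarrow> (a, b) \<in> r \<or> (b, a) \<in> r"
proof -
  have po: "partial_order_on A r" using assms unfolding linear_order_on_def by blast
  show "(a, a) \<in> r" if "a \<in> A" using refl_onD[OF partial_order_onD(1)[OF po] that] .
  show "trans r" using partial_order_onD(2)[OF po] .
  show "antisym r" using partial_order_onD(3)[OF po] .
  show "(a, b) \<in> r \<or> (b, a) \<in> r" if "a \<in> A" "b \<in> A"
    using assms that refl_onD[OF partial_order_onD(1)[OF po]]
    unfolding linear_order_on_def total_on_def by metis
qed

lemma nat_strong_rec_fixpoint:
  fixes F :: "(nat \<Rightarrow> 'a) \<Rightarrow> nat \<Rightarrow> 'a"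
  assumes "\<And>g h n. (\<And>m. m < n \<Longrightarrow> g m = h m) \<Longrightarrow> F g n = F h n"
  obtains g where "\<And>n. g n = F g n"
proof -
  let ?g = "wfrec {(m, n). m < n} F"
  have "adm_wf {(m, n). m < n} F"
    unfolding adm_wf_def
  proof (intro allI impI)
    fix g h :: "nat \<Rightarrow> 'a" and n :: nat assume "\<forall>m. (m, n) \<in> {(m, n). m < n} \<longrightarrow> g m = h m"
    then show "F g n = F h n" by (intro assms) simp
  qed
  then have "?g = F ?g" by (rule wfrec_fixpoint[OF wf_less])
  then have "?g n = F ?g n" for n by (rule fun_cong)
  then show thesis by (rule that)
qed

lemma countable_enumeration_starting_with:
  assumes "countable A" "a \<in> A" "b \<in> A"
  obtains e :: "nat \<Rightarrow> 'a" where "range e = A" "e 0 = a" "e 1 = b"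
proof -
  define e where "e n = (if n = 0 then a else if n = 1 then b else from_nat_into A (n - 2))" for n
  have ne: "A \<noteq> {}" using assms by blast
  have "range e \<subseteq> A" using assms from_nat_into[OF ne] unfolding e_def by auto
  moreover have "z \<in> range e" if "z \<in> A" for z
  proof -
    have "z \<in> range (from_nat_into A)" using that range_from_nat_into[OF ne assms(1)] by simp
    then obtain k where "z = from_nat_into A k" by blast
    then have "z = e (k + 2)" unfolding e_def by simp
    then show ?thesis by blast
  qed
  ultimately have "range e = A" by blast
  then show thesis by (rule that) (simp_all add: e_def)
qed

lemma dense_between_finite_sets:
  fixes S T :: "'a :: dense_linorder set"
  assumes "finite S" "finite T" "S \<noteq> {}" "T \<noteq> {}" "\<forall>s\<in>S. \<forall>t\<in>T. s < t"
  obtains q where "\<forall>s\<in>S. s < q" "\<forall>t\<in>T. q < t"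
proof -
  have "Max S \<in> S" "Min T \<in> T" using assms(1-4) by simp_all
  then have "Max S < Min T" using assms(5) by blast
  then obtain q where q: "Max S < q" "q < Min T" using dense by blast
  have "\<forall>s\<in>S. s < q" using q(1) assms(1) by (meson Max_ge le_less_trans)
  moreover have "\<forall>t\<in>T. q < t" using q(2) assms(2) by (meson Min_le less_le_trans)
  ultimately show thesis by (rule that)
qed

definition compatible_position :: "(nat \<Rightarrow> 'a) \<Rightarrow> 'a rel \<Rightarrow> (nat \<Rightarrow> rat) \<Rightarrow> nat \<Rightarrow> rat \<Rightarrow> bool" where
  "compatible_position e r h n q \<longleftrightarrow>
     (\<forall>m<n. ((e m, e n) \<in> r \<longleftrightarrow> h m \<le> q) \<and> ((e n, e m) \<in> r \<longleftrightarrow> q \<le> h m))"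

lemma compatible_position_cong:
  "(\<And>m. m < n \<Longrightarrow> g m = h m) \<Longrightarrow> compatible_position e r g n q = compatible_position e r h n q"
  unfolding compatible_position_def by simp

lemma order_if_compatible_positions:
  assumes "linear_order_on A r" "range e \<subseteq> A"
    and "\<And>k. k < n \<Longrightarrow> compatible_position e r h k (h k)" "m < n" "m' < n"
  shows "(e m, e m') \<in> r \<longleftrightarrow> h m \<le> h m'"
proof -
  consider "m < m'" | "m' < m" | "m = m'" by linarith
  then show ?thesis
  proof cases
    case 1
    then show ?thesis using assms(3)[of m'] assms(5) by (simp add: compatible_position_def)
  next
    case 2
    then show ?thesis using assms(3)[of m] assms(4) by (simp add: compatible_position_def)
  next
    case 3
    then show ?thesis using linear_order_onD(1)[OF assms(1) range_subsetD[OF assms(2)]] by simp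
  qed
qed

lemma below_above_positions_separated:
  fixes h :: "nat \<Rightarrow> 'b :: linorder"
  assumes lin: "linear_order_on A r"
    and order: "\<And>m m'. m < n \<Longrightarrow> m' < n \<Longrightarrow> (e m, e m') \<in> r \<longleftrightarrow> h m \<le> h m'"
    and new: "\<not> (\<exists>m<n. e m = e n)"
    and m: "m < n" "(e m, e n) \<in> r" and m': "m' < n" "(e n, e m') \<in> r"
  shows "h m < h m'"
proof -
  note tr = linear_order_onD(2)[OF lin]
  have "(e m, e m') \<in> r" using m(2) m'(2) tr by (blast dest: transD)
  moreover have "(e m', e m) \<notin> r"
  proof
    assume "(e m', e m) \<in> r"
    then have "(e n, e m) \<in> r" using m'(2) tr by (blast dest: transD)
    then have "e m = e n" using m(2) linear_order_onD(3)[OF lin] by (blast dest: antisymD)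
    then show False using new m(1) by blast
  qed
  ultimately show ?thesis using m(1) m'(1) order[of m m'] order[of m' m] by simp
qed

lemma compatible_position_if_strictly_between:
  assumes lin: "linear_order_on A r" and "range e \<subseteq> A" and new: "\<not> (\<exists>m<n. e m = e n)"
    and below: "\<And>m. m < n \<Longrightarrow> (e m, e n) \<in> r \<Longrightarrow> h m < q"
    and above: "\<And>m. m < n \<Longrightarrow> (e n, e m) \<in> r \<Longrightarrow> q < h m"
  shows "compatible_position e r h n q"
  unfolding compatible_position_def
proof (intro allI impI)
  fix m assume "m < n"
  then have "e m \<noteq> e n" "e m \<in> A" "e n \<in> A" using new assms(2) by auto
  moreover have "(e m, e n) \<in> r \<or> (e n, e m) \<in> r" by (rule linear_order_onD(4)[OF lin]) fact+
  ultimately consider "(e m, e n) \<in> r" "(e n, e m) \<notin> r" | "(e n, e m) \<in> r" "(e m, e n) \<notin> r"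
    using antisymD[OF linear_order_onD(3)[OF lin]] by metis
  then show "((e m, e n) \<in> r \<longleftrightarrow> h m \<le> q) \<and> ((e n, e m) \<in> r \<longleftrightarrow> q \<le> h m)"
  proof cases
    case 1
    then show ?thesis using below[OF \<open>m < n\<close>] by auto
  next
    case 2
    then show ?thesis using above[OF \<open>m < n\<close>] by auto
  qed
qed

lemma compatible_position_exists:
  assumes lin: "linear_order_on A r" and "range e \<subseteq> A"
    and order: "\<And>m m'. m < n \<Longrightarrow> m' < n \<Longrightarrow> (e m, e m') \<in> r \<longleftrightarrow> h m \<le> h m'"
    and unit: "h ` {..<n} \<subseteq> {0..1}"
    and below: "m\<^sub>0 < n" "(e m\<^sub>0, e n) \<in> r" and above: "m\<^sub>1 < n" "(e n, e m\<^sub>1) \<in> r"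
  shows "\<exists>q \<in> {0..1}. compatible_position e r h n q"
proof (cases "\<exists>m<n. e m = e n")
  case True
  then obtain m where "m < n" "e m = e n" by blast
  then have "compatible_position e r h n (h m)"
    unfolding compatible_position_def using order \<open>m < n\<close> by (simp add: \<open>e m = e n\<close>[symmetric])
  then show ?thesis using unit \<open>m < n\<close> by blast
next
  case False
  define S where "S = h ` {m. m < n \<and> (e m, e n) \<in> r}"
  define T where "T = h ` {m. m < n \<and> (e n, e m) \<in> r}"
  have "s < t" if "s \<in> S" "t \<in> T" for s t
    using that below_above_positions_separated[OF lin order False] unfolding S_def T_def by blast
  moreover have "finite S" "finite T" "S \<noteq> {}" "T \<noteq> {}"
    using below above unfolding S_def T_def by auto
  ultimately obtain q where q: "\<forall>s\<in>S. s < q" "\<forall>t\<in>T. q < t"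
    using dense_between_finite_sets by metis
  have "compatible_position e r h n q"
  proof (rule compatible_position_if_strictly_between[OF lin assms(2) False])
    show "h m < q" if "m < n" "(e m, e n) \<in> r" for m using q(1) that unfolding S_def by blast
    show "q < h m" if "m < n" "(e n, e m) \<in> r" for m using q(2) that unfolding T_def by blast
  qed
  moreover have "h m\<^sub>0 < q" "q < h m\<^sub>1" using q below above unfolding S_def T_def by blast+
  moreover have "h m\<^sub>0 \<in> {0..1}" "h m\<^sub>1 \<in> {0..1}" using unit below(1) above(1) by auto
  ultimately show ?thesis by force
qed

lemma order_embedding_iff:
  fixes h :: "nat \<Rightarrow> 'b :: linorder"
  assumes lin: "linear_order_on A r" and "range e \<subseteq> A"
    and order: "\<And>m m'. (e m, e m') \<in> r \<longleftrightarrow> h m \<le> h m'"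
  shows "e m = e m' \<longleftrightarrow> h m = h m'"
    and "(e m, e m') \<in> r \<and> e m \<noteq> e m' \<longleftrightarrow> h m < h m'"
proof -
  have "(e k, e k) \<in> r" for k using linear_order_onD(1)[OF lin range_subsetD[OF assms(2)]] .
  then show eq: "e m = e m' \<longleftrightarrow> h m = h m'"
    using order[of m m'] order[of m' m] antisymD[OF linear_order_onD(3)[OF lin]]
    by (metis order_antisym order_refl)
  show "(e m, e m') \<in> r \<and> e m \<noteq> e m' \<longleftrightarrow> h m < h m'"
    using eq order[of m m'] by auto
qed

lemma finite_nearest_values:
  fixes h :: "nat \<Rightarrow> 'b :: linorder"
  assumes "i \<le> N" "j \<le> N" "h i < q" "q < h j" "q \<notin> h ` {..N}"
  obtains mL mU where "h mL < q" "q < h mU" "\<And>m. m \<le> N \<Longrightarrow> h m \<le> h mL \<or> h mU \<le> h m"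
proof -
  define Lo where "Lo = {m. m \<le> N \<and> h m < q}"
  define Up where "Up = {m. m \<le> N \<and> q < h m}"
  have Lo_Up: "m \<in> Lo \<or> m \<in> Up" if "m \<le> N" for m
  proof -
    have "h m \<noteq> q" using assms(5) that by auto
    then show ?thesis using that unfolding Lo_def Up_def by (auto simp: neq_iff)
  qed
  have "i \<in> Lo" "j \<in> Up" "finite Lo" "finite Up"
    using assms(1-4) unfolding Lo_def Up_def by simp_all
  then have "Max (h ` Lo) \<in> h ` Lo" "Min (h ` Up) \<in> h ` Up"
    by (intro Max_in Min_in; auto)+
  then obtain mL mU where "mL \<in> Lo" "h mL = Max (h ` Lo)" "mU \<in> Up" "h mU = Min (h ` Up)" by auto
  with \<open>finite Lo\<close> \<open>finite Up\<close> have mL: "mL \<in> Lo" "\<And>m. m \<in> Lo \<Longrightarrow> h m \<le> h mL"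
    and mU: "mU \<in> Up" "\<And>m. m \<in> Up \<Longrightarrow> h mU \<le> h m" by simp_all
  have "h mL < q" "q < h mU" using mL(1) mU(1) unfolding Lo_def Up_def by simp_all
  moreover have "h m \<le> h mL \<or> h mU \<le> h m" if "m \<le> N" for m
    using Lo_Up[OF that] mL(2) mU(2) by auto
  ultimately show thesis by (rule that)
qed

text \<open>Only the forth half of back-and-forth is needed: sending each \<open>e n\<close> to the compatible
  position of least \<open>d\<close>-index is what makes \<open>h\<close> onto.\<close>

locale forth_construction =
  fixes A :: "'a set" and r :: "'a rel" and x y :: 'a and e :: "nat \<Rightarrow> 'a" and d h :: "nat \<Rightarrow> rat"
  assumes lin: "linear_order_on A r" and dense: "dense_order_on A r"
    and e: "range e = A" "e 0 = x" "e 1 = y" and xy: "x \<noteq> y"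
    and min: "\<forall>a\<in>A. (x, a) \<in> r" and max: "\<forall>a\<in>A. (a, y) \<in> r"
    and d: "range d = {0..1}" "d 0 = 0" "d 1 = 1"
    and least: "\<And>n. h n = d (LEAST k. compatible_position e r h n (d k))"
begin

lemma e_in_A: "range e \<subseteq> A"
  using e(1) by simp

lemma h_range: "h n \<in> {0..1}"
  using least[of n] d(1) by (metis rangeI)

lemma h_0: "h 0 = 0"
  using least[of 0] d(2) by (simp add: compatible_position_def)

lemma compatible_position_1_iff: "compatible_position e r h 1 q \<longleftrightarrow> 0 < q"
proof -
  have "y \<in> A" using e by auto
  then have "(x, y) \<in> r" "(y, x) \<notin> r"
    using min max xy antisymD[OF linear_order_onD(3)[OF lin]] by auto
  then show ?thesis using h_0 e(2,3) unfolding compatible_position_def by auto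
qed

lemma h_1: "h 1 = 1"
proof -
  have "(LEAST k. 0 < d k) = 1"
  proof (rule Least_equality)
    show "0 < d 1" using d(3) by simp
    show "1 \<le> k" if "0 < d k" for k using that d(2) by (cases k) auto
  qed
  then show ?thesis using least[of 1] d(3) unfolding compatible_position_1_iff by simp
qed

lemma compatible_position_h: "compatible_position e r h n (h n)"
proof (induction n rule: less_induct)
  case (less n)
  have "\<exists>q \<in> range d. compatible_position e r h n q"
  proof -
    consider "n = 0" | "n = 1" | "2 \<le> n" by linarith
    then show ?thesis
    proof cases
      case 1
      then show ?thesis using d(1) by (auto simp: compatible_position_def)
    next
      case 2
      have "compatible_position e r h 1 1" "(1 :: rat) \<in> range d"
        using compatible_position_1_iff d(1) by simp_all
      then show ?thesis using \<open>n = 1\<close> by blast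
    next
      case 3
      have "\<And>m m'. m < n \<Longrightarrow> m' < n \<Longrightarrow> (e m, e m') \<in> r \<longleftrightarrow> h m \<le> h m'"
        using order_if_compatible_positions[OF lin e_in_A] less by blast
      moreover have "h ` {..<n} \<subseteq> {0..1}" using h_range by auto
      moreover have "(e 0, e n) \<in> r" "(e n, e 1) \<in> r" using e min max by auto
      ultimately show ?thesis
        using compatible_position_exists[OF lin e_in_A, of n h 0 1] 3 d(1) by auto
    qed
  qed
  then have "\<exists>k. compatible_position e r h n (d k)" by blast
  then have "compatible_position e r h n (d (LEAST k. compatible_position e r h n (d k)))"
    by (rule LeastI_ex)
  then show ?case using least[of n] by simp
qed

lemma order: "(e m, e m') \<in> r \<longleftrightarrow> h m \<le> h m'"
  using order_if_compatible_positions[OF lin e_in_A, of "Suc (max m m')" h] compatible_position_h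
    by simp

lemma first_index_between:
  assumes "h a < h b"
  obtains m\<^sub>0 where "h a < h m\<^sub>0" "h m\<^sub>0 < h b" "\<And>m. m < m\<^sub>0 \<Longrightarrow> h m \<le> h a \<or> h b \<le> h m"
proof -
  note strict = order_embedding_iff(2)[OF lin e_in_A order]
  let ?between = "\<lambda>n. h a < h n \<and> h n < h b"
  have "(e a, e b) \<in> r \<and> e a \<noteq> e b" using strict \<open>h a < h b\<close> by blast
  moreover have "e a \<in> A" "e b \<in> A" using e by auto
  ultimately obtain c where "c \<in> A" "(e a, c) \<in> r \<and> e a \<noteq> c" "(c, e b) \<in> r \<and> c \<noteq> e b"
    using dense unfolding dense_order_on_def by blast
  moreover obtain n where "c = e n" using \<open>c \<in> A\<close> e by blast
  ultimately have "?between n" using strict by blast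
  then have "?between (LEAST n. ?between n)" by (rule LeastI)
  moreover have "h m \<le> h a \<or> h b \<le> h m" if "m < (LEAST n. ?between n)" for m
    using not_less_Least[OF that] by auto
  ultimately show thesis using that by blast
qed

lemma value_of_least_index_attained:
  assumes "1 \<le> N" and earlier: "\<And>j. j < k \<Longrightarrow> d j \<in> h ` {..N}"
  shows "d k \<in> range h"
proof (rule ccontr)
  assume new: "d k \<notin> range h"
  have "h 0 \<noteq> d k" "h 1 \<noteq> d k" using new by (metis rangeI)+
  moreover have "d k \<in> {0..1}" using d(1) by auto
  ultimately have "h 0 < d k" "d k < h 1" using h_0 h_1 by auto
  moreover have "d k \<notin> h ` {..N}" using new by blast
  ultimately obtain mL mU where gap: "h mL < d k" "d k < h mU"
    and outside: "\<And>m. m \<le> N \<Longrightarrow> h m \<le> h mL \<or> h mU \<le> h m"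
    using finite_nearest_values[OF le0 \<open>1 \<le> N\<close>] by blast
  obtain m\<^sub>0 where m\<^sub>0: "h mL < h m\<^sub>0" "h m\<^sub>0 < h mU"
    and before: "\<And>m. m < m\<^sub>0 \<Longrightarrow> h m \<le> h mL \<or> h mU \<le> h m"
    using first_index_between[of mL mU] gap by auto
  have "N < m\<^sub>0" using outside[of m\<^sub>0] m\<^sub>0 by force
  have "compatible_position e r h m\<^sub>0 (d k)"
    unfolding compatible_position_def order using before m\<^sub>0 gap by force
  moreover have "\<not> compatible_position e r h m\<^sub>0 (d j)" if jk: "j < k" for j
  proof
    assume "compatible_position e r h m\<^sub>0 (d j)"
    moreover obtain t where t: "t \<le> N" "d j = h t" using earlier[OF jk] by (blast elim: imageE)
    moreover from t(1) have "t < m\<^sub>0" using \<open>N < m\<^sub>0\<close> by simp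
    ultimately have "h t \<le> h m\<^sub>0 \<longleftrightarrow> h t \<le> h t" "h m\<^sub>0 \<le> h t \<longleftrightarrow> h t \<le> h t"
      unfolding compatible_position_def order by auto
    then show False using outside[OF t(1)] m\<^sub>0 by auto
  qed
  ultimately have "(LEAST k. compatible_position e r h m\<^sub>0 (d k)) = k"
    by (intro Least_equality) (auto simp: not_less[symmetric])
  then show False using least[of m\<^sub>0] new by (metis rangeI)
qed

lemma range_h: "range h = {0..1}"
proof -
  have "d k \<in> range h" for k
  proof (induction k rule: less_induct)
    case (less k)
    then have "\<forall>j. \<exists>m. j < k \<longrightarrow> h m = d j" by (metis rangeE)
    then obtain t where t: "\<And>j. j < k \<Longrightarrow> h (t j) = d j" by (metis choice)
    define N where "N = Max (insert 1 (t ` {..<k}))"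
    have "d j \<in> h ` {..N}" if "j < k" for j
    proof (rule image_eqI[where f = h, OF t[OF that, symmetric]])
      show "t j \<in> {..N}" using that unfolding N_def by simp
    qed
    moreover have "1 \<le> N" unfolding N_def by simp
    ultimately show ?case by (intro value_of_least_index_attained)
  qed
  then have "range d \<subseteq> range h" by blast
  moreover have "range h \<subseteq> {0..1}" using h_range by blast
  ultimately show ?thesis using d(1) by blast
qed

lemma wild: "wild A r"
proof -
  define f where "f a = h (inv e a)" for a
  have e_inv: "e (inv e a) = a" if "a \<in> A" for a using that e(1) by (simp add: f_inv_into_f)
  have f_order: "(a, b) \<in> r \<longleftrightarrow> f a \<le> f b" if "a \<in> A" "b \<in> A" for a b
    using order[of "inv e a" "inv e b"] e_inv that unfolding f_def by simp
  have "f (e n) = h n" for n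
    using order_embedding_iff(1)[OF lin e_in_A order, of "inv e (e n)" n] e_inv e(1)
    unfolding f_def by auto
  then have "f ` A = {0..1}" by (simp add: image_image range_h flip: e(1))
  moreover have "inj_on f A"
  proof (rule inj_onI)
    fix a b assume "a \<in> A" "b \<in> A" "f a = f b"
    then have "(a, b) \<in> r" "(b, a) \<in> r" using f_order by simp_all
    then show "a = b" using antisymD[OF linear_order_onD(3)[OF lin]] by blast
  qed
  moreover have "{0..1} = {q :: rat. 0 \<le> q \<and> q \<le> 1}" by auto
  ultimately have "bij_betw f A {q. 0 \<le> q \<and> q \<le> 1}" unfolding bij_betw_def by simp
  then show ?thesis unfolding wild_def using f_order by blast
qed

end

theorem wild_if_dense_order_with_endpoints:
  assumes "countable A" "linear_order_on A r" "dense_order_on A r"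
    and "x \<in> A" "y \<in> A" "x \<noteq> y" "\<forall>a\<in>A. (x, a) \<in> r" "\<forall>a\<in>A. (a, y) \<in> r"
  shows "wild A r"
proof -
  obtain e :: "nat \<Rightarrow> 'a" where e: "range e = A" "e 0 = x" "e 1 = y"
    using countable_enumeration_starting_with[OF assms(1,4,5)] by blast
  have "countable {0..1::rat}" by (rule countableI_type)
  then obtain d :: "nat \<Rightarrow> rat" where d: "range d = {0..1}" "d 0 = 0" "d 1 = 1"
    using countable_enumeration_starting_with[of "{0..1::rat}" 0 1] by auto
  have cong: "d (LEAST k. compatible_position e r g n (d k)) =
      d (LEAST k. compatible_position e r g' n (d k))"
    if "\<And>m. m < n \<Longrightarrow> g m = g' m" for g g' n
  proof -
    have "compatible_position e r g n = compatible_position e r g' n"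
      using that by (intro ext compatible_position_cong)
    then show ?thesis by simp
  qed
  obtain h where "\<And>n. h n = d (LEAST k. compatible_position e r h n (d k))"
    using nat_strong_rec_fixpoint[of "\<lambda>h n. d (LEAST k. compatible_position e r h n (d k))",
        OF cong]
    by blast
  then interpret forth_construction A r x y e d h
    using assms(2,3,6-8) e d by unfold_locales
  show ?thesis by (rule wild)
qed

section \<open>Paths\<close>

lemma path_edges_conv_image: "path_edges p = (\<lambda>i. {p ! i, p ! Suc i}) ` {..<length p - 1}"
  unfolding path_edges_def by auto

lemma path_edges_Nil [simp]: "path_edges [] = {}"
  and path_edges_singleton [simp]: "path_edges [a] = {}"
  by (simp_all add: path_edges_conv_image)

lemma path_edges_Cons_Cons [simp]: "path_edges (a # b # zs) = insert {a, b} (path_edges (b # zs))"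
  by (simp add: path_edges_conv_image lessThan_Suc_eq_insert_0 image_image)

lemma finite_path_edges: "finite (path_edges p)"
  by (simp add: path_edges_conv_image)

lemma path_edge_subset_set: "f \<in> path_edges p \<Longrightarrow> f \<subseteq> set p"
  unfolding path_edges_def by auto

lemma path_edges_Cons_subset: "path_edges p \<subseteq> path_edges (a # p)"
  by (cases p) auto

lemma path_edges_append_subset:
  "path_edges xs \<subseteq> path_edges (xs @ ys)" "path_edges ys \<subseteq> path_edges (xs @ ys)"
proof -
  show "path_edges xs \<subseteq> path_edges (xs @ ys)"
  proof (induction xs)
    case (Cons x xs)
    then show ?case by (cases xs) auto
  qed simp
  show "path_edges ys \<subseteq> path_edges (xs @ ys)"
    by (induction xs) (auto dest: subsetD[OF path_edges_Cons_subset])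
qed

lemma path_edges_infix_subset: "path_edges ys \<subseteq> path_edges (xs @ ys @ zs)"
  using path_edges_append_subset by blast

lemma is_path_infix:
  assumes "is_path G (as @ ys @ zs)" "ys \<noteq> []"
  shows "is_path G ys"
  using assms path_edges_infix_subset[of ys as zs] unfolding is_path_def by auto

lemma first_edge_in_path_edges: "{a, hd (cs @ [b])} \<in> path_edges (a # cs @ [b])"
  by (cases cs) auto

lemma path_edge_at_vertex:
  assumes "2 \<le> length p" "v \<in> set p"
  obtains f where "f \<in> path_edges p" "v \<in> f"
proof -
  obtain k where k: "k < length p" "p ! k = v" using assms(2) by (meson in_set_conv_nth)
  show thesis
  proof (cases "Suc k < length p")
    case True
    then show thesis using that[of "{p ! k, p ! Suc k}"] k unfolding path_edges_def by blast
  next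
    case False
    then have "Suc (k - 1) < length p" "Suc (k - 1) = k" using assms(1) k(1) by auto
    then show thesis using that[of "{p ! (k - 1), p ! Suc (k - 1)}"] k unfolding path_edges_def
      by (metis (mono_tags, lifting) insertCI mem_Collect_eq)
  qed
qed

lemma path_edge_at_endpoint:
  assumes "distinct p" "f \<in> path_edges p" "v \<in> f"
  shows "v = hd p \<Longrightarrow> f = {p ! 0, p ! 1}"
    and "v = last p \<Longrightarrow> f = {p ! (length p - 2), p ! (length p - 1)}"
proof -
  obtain i where i: "f = {p ! i, p ! Suc i}" "Suc i < length p"
    using assms(2) unfolding path_edges_def by blast
  then have ne: "p \<noteq> []" by auto
  have eq: "p ! j = p ! k \<longleftrightarrow> j = k" if "j < length p" "k < length p" for j k
    using nth_eq_iff_index_eq[OF assms(1) that] .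
  show "f = {p ! 0, p ! 1}" if "v = hd p"
  proof -
    have "p ! 0 \<in> {p ! i, p ! Suc i}" using that assms(3) i by (auto simp: hd_conv_nth[OF ne])
    moreover have "p ! 0 \<noteq> p ! Suc i" using eq[of 0 "Suc i"] i(2) ne by simp
    ultimately have "p ! 0 = p ! i" by blast
    then have "i = 0" using eq[of 0 i] i(2) ne by simp
    then show ?thesis using i(1) by simp
  qed
  show "f = {p ! (length p - 2), p ! (length p - 1)}" if "v = last p"
  proof -
    have "p ! (length p - 1) \<in> {p ! i, p ! Suc i}"
      using that assms(3) i by (auto simp: last_conv_nth[OF ne])
    moreover have "p ! (length p - 1) \<noteq> p ! i" using eq[of "length p - 1" i] i(2) by simp
    ultimately have "p ! (length p - 1) = p ! Suc i" by blast
    then have "Suc i = length p - 1" using eq[of "length p - 1" "Suc i"] i(2) by simp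
    then have "length p - 2 = i" "length p - 1 = Suc i" by auto
    then show ?thesis using i(1) by simp
  qed
qed

lemma path_le_iff_split: "path_le p u w \<longleftrightarrow> (\<exists>as bs. p = as @ u # bs \<and> w \<in> set (u # bs))"
proof
  assume "path_le p u w"
  then obtain i j where ij: "i \<le> j" "j < length p" "p ! i = u" "p ! j = w"
    unfolding path_le_def by blast
  then have "p = take i p @ u # drop (Suc i) p" using id_take_nth_drop[of i p] by simp
  moreover have "w \<in> set (u # drop (Suc i) p)"
  proof (cases "i = j")
    case False
    then have "w = drop (Suc i) p ! (j - Suc i)" "j - Suc i < length (drop (Suc i) p)"
      using ij by auto
    then have "w \<in> set (drop (Suc i) p)" by (metis nth_mem)
    then show ?thesis by simp
  qed (use ij in simp)
  ultimately show "\<exists>as bs. p = as @ u # bs \<and> w \<in> set (u # bs)" by blast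
next
  assume "\<exists>as bs. p = as @ u # bs \<and> w \<in> set (u # bs)"
  then obtain as bs where "p = as @ u # bs" "w \<in> set (u # bs)" by blast
  moreover from this obtain k where "k < length (u # bs)" "(u # bs) ! k = w"
    by (meson in_set_conv_nth)
  ultimately show "path_le p u w" unfolding path_le_def
    by (intro exI[of _ "length as"] exI[of _ "length as + k"]) (auto simp: nth_append)
qed

lemma path_le_split:
  assumes "path_le p a b" "a \<noteq> b"
  obtains as cs ds where "p = as @ a # cs @ b # ds"
  using assms unfolding path_le_iff_split by (auto simp: in_set_conv_decomp)

lemma path_le_infix:
  assumes "p = as @ a # cs @ b # ds" "c \<in> set cs"
  shows "path_le p a c" "path_le p c b"
proof -
  obtain c1 c2 where "cs = c1 @ c # c2" using assms(2) by (meson split_list)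
  then show "path_le p a c" "path_le p c b"
    using assms(1) unfolding path_le_iff_split
    by (metis append.assoc append_Cons in_set_conv_decomp list.set_intros(1,2))+
qed

lemma filter_consecutive_split:
  "Suc t < length (filter P q) \<Longrightarrow>
   \<exists>as cs ds. q = as @ filter P q ! t # cs @ filter P q ! Suc t # ds \<and> (\<forall>c\<in>set cs. \<not> P c)"
proof (induction q arbitrary: t)
  case (Cons z q)
  show ?case
  proof (cases "P z")
    case True
    show ?thesis
    proof (cases t)
      case 0
      have "filter P q \<noteq> []" using Cons.prems True 0 by auto
      then obtain y rest where yr: "filter P q = y # rest" by (cases "filter P q") auto
      obtain us vs where "q = us @ y # vs" "\<forall>u\<in>set us. \<not> P u"
        using filter_eq_ConsD[OF yr] by blast
      then show ?thesis using 0 True yr by (intro exI[of _ "[]"] exI[of _ us] exI[of _ vs]) simp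
    next
      case (Suc t')
      then have "Suc t' < length (filter P q)" using Cons.prems True by simp
      then obtain as cs ds where "q = as @ filter P q ! t' # cs @ filter P q ! Suc t' # ds"
        "\<forall>c\<in>set cs. \<not> P c" using Cons.IH by blast
      then show ?thesis using Suc True by (intro exI[of _ "z # as"] exI[of _ cs] exI[of _ ds]) simp
    qed
  next
    case False
    then have "Suc t < length (filter P q)" using Cons.prems by simp
    then obtain as cs ds where "q = as @ filter P q ! t # cs @ filter P q ! Suc t # ds"
      "\<forall>c\<in>set cs. \<not> P c" using Cons.IH by blast
    then show ?thesis using False by (intro exI[of _ "z # as"] exI[of _ cs] exI[of _ ds]) simp
  qed
qed simp

section \<open>Subdivisions\<close>

definition subdivision_map :: "'a graph \<Rightarrow> 'a graph \<Rightarrow> ('a set \<Rightarrow> 'a list) \<Rightarrow> bool" where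
  "subdivision_map G H \<phi> \<longleftrightarrow>
     (\<forall>e\<in>edges H. \<exists>u v. e = {u, v} \<and> xy_path G (\<phi> e) u v \<and> set (\<phi> e) \<inter> verts H = {u, v}) \<and>
     (\<forall>e\<in>edges H. \<forall>e'\<in>edges H. e \<noteq> e' \<longrightarrow> set (\<phi> e) \<inter> set (\<phi> e') \<subseteq> verts H) \<and>
     edges G = (\<Union>e\<in>edges H. path_edges (\<phi> e))"

lemma subdivision_map_exists:
  assumes "subdivision_of G H"
  obtains \<phi> where "subdivision_map G H \<phi>"
proof -
  have "\<exists>\<phi>. subdivision_map G H \<phi>"
    using assms unfolding subdivision_of_def subdivision_map_def
    by (elim conjE exE) (intro exI conjI; assumption)
  then show thesis using that by blast
qed

lemma subdivision_mapD:
  assumes "subdivision_map G H \<phi>"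
  shows "\<forall>e\<in>edges H. \<exists>u v. e = {u, v} \<and> xy_path G (\<phi> e) u v \<and> set (\<phi> e) \<inter> verts H = {u, v}"
    and "\<forall>e\<in>edges H. \<forall>e'\<in>edges H. e \<noteq> e' \<longrightarrow> set (\<phi> e) \<inter> set (\<phi> e') \<subseteq> verts H"
    and "edges G = (\<Union>e\<in>edges H. path_edges (\<phi> e))"
proof -
  note def = assms[unfolded subdivision_map_def]
  show "\<forall>e\<in>edges H. \<exists>u v. e = {u, v} \<and> xy_path G (\<phi> e) u v \<and> set (\<phi> e) \<inter> verts H = {u, v}"
    using def by (rule conjunct1)
  show "\<forall>e\<in>edges H. \<forall>e'\<in>edges H. e \<noteq> e' \<longrightarrow> set (\<phi> e) \<inter> set (\<phi> e') \<subseteq> verts H"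
    using def by (rule conjunct1[OF conjunct2])
  show "edges G = (\<Union>e\<in>edges H. path_edges (\<phi> e))"
    using def by (rule conjunct2[OF conjunct2])
qed

lemma subdivision_map_branch_path:
  assumes "subdivision_map G H \<phi>" "e \<in> edges H"
  obtains u v where "e = {u, v}" "xy_path G (\<phi> e) u v" "set (\<phi> e) \<inter> verts H = {u, v}"
  using bspec[OF subdivision_mapD(1)[OF assms(1)] assms(2)] that by (elim exE conjE)

lemma subdivision_map_inner_vertex_unique:
  assumes "subdivision_map G H \<phi>" "e \<in> edges H" "e' \<in> edges H"
    and "v \<notin> verts H" "v \<in> set (\<phi> e)" "v \<in> set (\<phi> e')"
  shows "e = e'"
  using subdivision_mapD(2)[OF assms(1)] assms(2-) by blast

lemma subdivision_map_edge:
  assumes "subdivision_map G H \<phi>" "f \<in> edges G"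
  obtains e where "e \<in> edges H" "f \<in> path_edges (\<phi> e)"
  using subdivision_mapD(3)[OF assms(1)] assms(2) that by blast

lemma finite_edges_at_subdividing_vertex:
  assumes sd: "subdivision_map G H \<phi>" and "v \<notin> verts H"
  shows "finite {f \<in> edges G. v \<in> f}"
proof (cases "\<exists>e\<in>edges H. v \<in> set (\<phi> e)")
  case True
  then obtain e\<^sub>0 where e\<^sub>0: "e\<^sub>0 \<in> edges H" "v \<in> set (\<phi> e\<^sub>0)" by blast
  have "f \<in> path_edges (\<phi> e\<^sub>0)" if "f \<in> edges G" "v \<in> f" for f
  proof -
    obtain e where e: "e \<in> edges H" "f \<in> path_edges (\<phi> e)"
      using subdivision_map_edge[OF sd \<open>f \<in> edges G\<close>] .
    then have "v \<in> set (\<phi> e)" using path_edge_subset_set \<open>v \<in> f\<close> by blast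
    then have "e = e\<^sub>0"
      using subdivision_map_inner_vertex_unique[OF sd e(1) e\<^sub>0(1) assms(2)] e\<^sub>0 by blast
    then show ?thesis using e by simp
  qed
  then show ?thesis using finite_path_edges by (blast intro: finite_subset)
next
  case False
  have "f \<notin> edges G" if "v \<in> f" for f
  proof
    assume "f \<in> edges G"
    then obtain e where "e \<in> edges H" "f \<in> path_edges (\<phi> e)" by (rule subdivision_map_edge[OF sd])
    then show False using False path_edge_subset_set \<open>v \<in> f\<close> by blast
  qed
  then have "{f \<in> edges G. v \<in> f} = {}" by blast
  then show ?thesis by (simp only: finite.emptyI)
qed

lemma subdividing_walk_in_branch_path:
  assumes sd: "subdivision_map G H \<phi>"
  shows "path_edges (u # cs @ [w]) \<subseteq> edges G \<Longrightarrow> \<forall>c\<in>set cs. c \<notin> verts H \<Longrightarrow>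
    \<exists>e\<in>edges H. set (u # cs @ [w]) \<subseteq> set (\<phi> e) \<and> path_edges (u # cs @ [w]) \<subseteq> path_edges (\<phi> e)"
proof (induction cs arbitrary: u)
  case Nil
  then have "{u, w} \<in> edges G" by simp
  then obtain e where "e \<in> edges H" "{u, w} \<in> path_edges (\<phi> e)"
    by (rule subdivision_map_edge[OF sd])
  then show ?case using path_edge_subset_set by fastforce
next
  case (Cons c cs)
  then have "{u, c} \<in> edges G" by simp
  then obtain e\<^sub>1 where e\<^sub>1: "e\<^sub>1 \<in> edges H" "{u, c} \<in> path_edges (\<phi> e\<^sub>1)"
    by (rule subdivision_map_edge[OF sd])
  have "path_edges (c # cs @ [w]) \<subseteq> edges G" "\<forall>c'\<in>set cs. c' \<notin> verts H" "c \<notin> verts H"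
    using Cons.prems by auto
  then obtain e where e: "e \<in> edges H" "set (c # cs @ [w]) \<subseteq> set (\<phi> e)"
    "path_edges (c # cs @ [w]) \<subseteq> path_edges (\<phi> e)"
    using Cons.IH by blast
  have "c \<in> set (\<phi> e\<^sub>1)" using path_edge_subset_set[OF e\<^sub>1(2)] by blast
  then have "e\<^sub>1 = e"
    using subdivision_map_inner_vertex_unique[OF sd e\<^sub>1(1) e(1) \<open>c \<notin> verts H\<close>] e(2) by simp
  then show ?case using e e\<^sub>1 path_edge_subset_set[OF e\<^sub>1(2)] by auto
qed

lemma subdividing_walks_same_first_edge:
  assumes sd: "subdivision_map G H \<phi>" and ab: "a \<in> verts H" "b \<in> verts H" "a \<noteq> b"
    and "path_edges (a # cs @ [b]) \<subseteq> edges G" "\<forall>c\<in>set cs. c \<notin> verts H"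
    and "path_edges (a # cs' @ [b]) \<subseteq> edges G" "\<forall>c\<in>set cs'. c \<notin> verts H"
  shows "{a, hd (cs @ [b])} = {a, hd (cs' @ [b])}"
proof -
  have first_edge: "{a, hd (cs @ [b])} \<in> path_edges (\<phi> e) \<and> e = {a, b}"
    if e: "e \<in> edges H" and walk: "path_edges (a # cs @ [b]) \<subseteq> path_edges (\<phi> e)"
      and walk_set: "set (a # cs @ [b]) \<subseteq> set (\<phi> e)" for cs e
  proof
    show "{a, hd (cs @ [b])} \<in> path_edges (\<phi> e)" by (rule subsetD[OF walk first_edge_in_path_edges])
    obtain u v where "e = {u, v}" "set (\<phi> e) \<inter> verts H = {u, v}"
      using subdivision_map_branch_path[OF sd e] by blast
    then show "e = {a, b}" using walk_set ab by auto
  qed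
  obtain e where "e \<in> edges H" "{a, hd (cs @ [b])} \<in> path_edges (\<phi> e)" "e = {a, b}"
    using subdividing_walk_in_branch_path[OF sd assms(5,6)] first_edge by blast
  moreover obtain e' where "{a, hd (cs' @ [b])} \<in> path_edges (\<phi> e')" "e' = {a, b}"
    using subdividing_walk_in_branch_path[OF sd assms(7,8)] first_edge by blast
  moreover obtain u v where "{a, b} = {u, v}" "xy_path G (\<phi> {a, b}) u v"
    using subdivision_map_branch_path[OF sd] calculation(1,3) by metis
  then have "distinct (\<phi> {a, b})" "a = hd (\<phi> {a, b}) \<or> a = last (\<phi> {a, b})"
    unfolding xy_path_def is_path_def by (auto simp: doubleton_eq_iff)
  ultimately show ?thesis using path_edge_at_endpoint[of "\<phi> {a, b}"] by (metis insertI1)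
qed

lemma xy_path_branch_filter:
  assumes sd: "subdivision_map G H \<phi>" and q: "is_path G q" "hd q \<in> verts H" "last q \<in> verts H"
  shows "xy_path H (filter (\<lambda>v. v \<in> verts H) q) (hd q) (last q)"
proof -
  define fq where "fq = filter (\<lambda>v. v \<in> verts H) q"
  have "q \<noteq> []" "distinct q" "path_edges q \<subseteq> edges G" using q(1) unfolding is_path_def by auto
  have "hd fq = hd q" using \<open>q \<noteq> []\<close> q(2) unfolding fq_def by (cases q) auto
  moreover have "last fq = last q"
    using \<open>q \<noteq> []\<close> q(3) unfolding fq_def
    by (metis filter.simps filter_append last_snoc snoc_eq_iff_butlast)
  moreover have "fq \<noteq> []" using \<open>q \<noteq> []\<close> q(2) unfolding fq_def by (cases q) auto
  moreover have "distinct fq" using \<open>distinct q\<close> unfolding fq_def by simp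
  moreover have "set fq \<subseteq> verts H" unfolding fq_def by auto
  moreover have "path_edges fq \<subseteq> edges H"
  proof
    fix f assume "f \<in> path_edges fq"
    then obtain t where t: "f = {fq ! t, fq ! Suc t}" "Suc t < length fq"
      unfolding path_edges_def by blast
    obtain as cs ds where split: "q = as @ (fq ! t # cs @ [fq ! Suc t]) @ ds"
      "\<forall>c\<in>set cs. c \<notin> verts H"
      using filter_consecutive_split[OF t(2)[unfolded fq_def]] unfolding fq_def by auto
    then have "path_edges (fq ! t # cs @ [fq ! Suc t]) \<subseteq> path_edges q"
      by (subst split(1)) (rule path_edges_infix_subset)
    then have "path_edges (fq ! t # cs @ [fq ! Suc t]) \<subseteq> edges G"
      using \<open>path_edges q \<subseteq> edges G\<close> by blast
    then obtain e where e: "e \<in> edges H" "set (fq ! t # cs @ [fq ! Suc t]) \<subseteq> set (\<phi> e)"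
      using subdividing_walk_in_branch_path[OF sd _ split(2)] by blast
    obtain u v where "e = {u, v}" "set (\<phi> e) \<inter> verts H = {u, v}"
      using subdivision_map_branch_path[OF sd e(1)] by blast
    moreover have "fq ! t \<in> verts H" "fq ! Suc t \<in> verts H"
      using \<open>set fq \<subseteq> verts H\<close> t(2) by auto
    moreover have "fq ! t \<noteq> fq ! Suc t" using \<open>distinct fq\<close> t(2) by (simp add: nth_eq_iff_index_eq)
    ultimately have "f = e" using e(2) t(1) by auto
    then show "f \<in> edges H" using e(1) by simp
  qed
  ultimately show ?thesis unfolding xy_path_def is_path_def fq_def by blast
qed

section \<open>Grain lines\<close>

lemma L_lt_mono: "m \<le> n \<Longrightarrow> L_lt L P m \<subseteq> L_lt L P n"
  unfolding L_lt_def by (fastforce intro: less_le_trans)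

lemma finite_L_lt: "finite (L_lt L P n)"
  unfolding L_lt_def by auto

lemma grain_line_paths: "grain_line G x y L r P \<Longrightarrow> xy_path G (P n) x y"
  unfolding grain_line_def by (elim conjE) (erule spec)

lemma grain_line_edge_disjoint:
  "grain_line G x y L r P \<Longrightarrow> i \<noteq> j \<Longrightarrow> path_edges (P i) \<inter> path_edges (P j) = {}"
  unfolding grain_line_def by (elim conjE) metis

lemma grain_line_private_vertex:
  "grain_line G x y L r P \<Longrightarrow> v \<in> set (P n) \<Longrightarrow> v \<in> set (P m) \<Longrightarrow> m \<noteq> n \<Longrightarrow> v \<in> L"
  unfolding grain_line_def by (elim conjE) metis

lemma grain_line_order:
  "grain_line G x y L r P \<Longrightarrow> a \<in> L_lt L P n \<Longrightarrow> b \<in> L_lt L P n \<Longrightarrow>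
   path_le (P n) a b \<longleftrightarrow> (a, b) \<in> r"
  unfolding grain_line_def by (elim conjE) metis

lemma grain_line_vertex_eventually:
  assumes "grain_line G x y L r P" "v \<in> L"
  obtains m where "\<And>n. v \<in> set (P n) \<longleftrightarrow> m \<le> n"
proof -
  have "L = {v. \<exists>m. {n. v \<in> set (P n)} = {m..}}"
    using assms(1) unfolding grain_line_def by (elim conjE)
  then obtain m where "{n. v \<in> set (P n)} = {m..}" using assms(2) by blast
  then show thesis using that by (metis atLeast_iff mem_Collect_eq)
qed

lemma grain_line_L_lt_eventually:
  assumes "grain_line G x y L r P" "finite C" "C \<subseteq> L"
  obtains N where "C \<subseteq> L_lt L P N"
proof -
  have "\<exists>N. C \<subseteq> L_lt L P N" using assms(2,3)
  proof (induction C rule: finite_induct)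
    case (insert v C)
    then obtain N where N: "C \<subseteq> L_lt L P N" by blast
    obtain m where "\<And>n. v \<in> set (P n) \<longleftrightarrow> m \<le> n"
      using grain_line_vertex_eventually[OF assms(1)] insert.prems by blast
    then have "v \<in> L_lt L P (Suc m)" using insert.prems unfolding L_lt_def by blast
    then have "insert v C \<subseteq> L_lt L P (max N (Suc m))"
      using N L_lt_mono[of N "max N (Suc m)" L P] L_lt_mono[of "Suc m" "max N (Suc m)" L P] by auto
    then show ?case by blast
  qed simp
  then show thesis using that by blast
qed

lemma xy_path_length:
  assumes "xy_path G p x y" "x \<noteq> y"
  shows "2 \<le> length p"
proof (rule ccontr)
  assume "\<not> 2 \<le> length p"
  moreover have "p \<noteq> []" using assms(1) unfolding xy_path_def is_path_def by blast
  ultimately have "length p = 1" using length_greater_0_conv[of p] by linarith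
  then obtain z where "p = [z]" by (cases p) auto
  then show False using assms unfolding xy_path_def by auto
qed

lemma grain_line_vertex_infinite_degree:
  assumes gl: "grain_line G x y L r P" and "v \<in> L"
  shows "infinite {f \<in> edges G. v \<in> f}"
proof
  assume fin: "finite {f \<in> edges G. v \<in> f}"
  obtain m where m: "\<And>n. v \<in> set (P n) \<longleftrightarrow> m \<le> n"
    using grain_line_vertex_eventually[OF assms] by blast
  have "x \<noteq> y" using gl unfolding grain_line_def by (elim conjE)
  have "\<exists>f. f \<in> path_edges (P n) \<and> v \<in> f" if "m \<le> n" for n
  proof -
    have "2 \<le> length (P n)" using xy_path_length[OF grain_line_paths[OF gl] \<open>x \<noteq> y\<close>] .
    moreover have "v \<in> set (P n)" using m that by blast
    ultimately obtain f where "f \<in> path_edges (P n)" "v \<in> f" by (rule path_edge_at_vertex)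
    then show ?thesis by blast
  qed
  then obtain F where F: "\<And>n. m \<le> n \<Longrightarrow> F n \<in> path_edges (P n) \<and> v \<in> F n" by metis
  have "inj_on F {m..}"
  proof (rule inj_onI)
    fix i j assume "i \<in> {m..}" "j \<in> {m..}" "F i = F j"
    then have "F i \<in> path_edges (P i) \<inter> path_edges (P j)" using F[of i] F[of j] by simp
    then show "i = j" using grain_line_edge_disjoint[OF gl] by blast
  qed
  then have "infinite (F ` {m..})" using finite_imageD infinite_Ici by blast
  moreover have "F ` {m..} \<subseteq> {f \<in> edges G. v \<in> f}"
    using F grain_line_paths[OF gl] unfolding xy_path_def is_path_def by auto
  ultimately show False using fin finite_subset by blast
qed

lemma grain_line_in_branch_vertices:
  assumes "grain_line G x y L r P" "subdivision_map G H \<phi>"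
  shows "L \<subseteq> verts H"
  using grain_line_vertex_infinite_degree[OF assms(1)]
    finite_edges_at_subdividing_vertex[OF assms(2)]
  by blast

lemma grain_line_gap_segment_avoids_L:
  assumes gl: "grain_line G x y L r P" and ab: "a \<in> L_lt L P n" "b \<in> L_lt L P n"
    and split: "P n = as @ a # cs @ b # ds"
    and gap: "\<not> (\<exists>c\<in>L. (a, c) \<in> r \<and> a \<noteq> c \<and> (c, b) \<in> r \<and> c \<noteq> b)"
  shows "set cs \<inter> L_lt L P n = {}"
proof (rule ccontr)
  assume "set cs \<inter> L_lt L P n \<noteq> {}"
  then obtain c where c: "c \<in> set cs" "c \<in> L_lt L P n" by blast
  have "(a, c) \<in> r" "(c, b) \<in> r"
    using path_le_infix[OF split c(1)] grain_line_order[OF gl] ab c(2) by blast+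
  moreover have "distinct (P n)"
    using grain_line_paths[OF gl] unfolding xy_path_def is_path_def by blast
  then have "a \<noteq> c" "c \<noteq> b" using split c(1) by auto
  moreover have "c \<in> L" using c(2) unfolding L_lt_def by blast
  ultimately show False using gap by blast
qed

lemma grain_line_gap_segments_disjoint:
  assumes gl: "grain_line G x y L r P" and "i < j" and ab: "a \<in> L_lt L P i" "b \<in> L_lt L P i"
    and split: "P i = as @ a # cs @ b # ds" "P j = as' @ a # cs' @ b # ds'"
    and gap: "\<not> (\<exists>c\<in>L. (a, c) \<in> r \<and> a \<noteq> c \<and> (c, b) \<in> r \<and> c \<noteq> b)"
  shows "set cs \<inter> set cs' = {}"
proof -
  have "L_lt L P i \<subseteq> L_lt L P j" using L_lt_mono[OF less_imp_le[OF \<open>i < j\<close>]] .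
  then have "set cs' \<inter> L_lt L P j = {}"
    using grain_line_gap_segment_avoids_L[OF gl _ _ split(2) gap] ab by blast
  moreover have "c \<in> L_lt L P j" if "c \<in> set cs" "c \<in> set cs'" for c
  proof -
    have "c \<in> set (P i)" "c \<in> set (P j)" using that split by auto
    moreover from this have "c \<in> L"
      using grain_line_private_vertex[OF gl] \<open>i < j\<close> by (metis less_irrefl)
    ultimately show ?thesis using \<open>i < j\<close> unfolding L_lt_def by blast
  qed
  ultimately show ?thesis by blast
qed

lemma subdivided_Pi_graph_no_infinite_fan:
  fixes cs :: "nat \<Rightarrow> 'a list"
  assumes sd: "subdivision_map G H \<phi>" and Pi: "Pi_graph H"
    and ab: "a \<in> verts H" "b \<in> verts H" "a \<noteq> b"
    and paths: "\<And>k. is_path G (a # cs k @ [b])"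
    and inner_disjoint: "\<And>i j. i \<noteq> j \<Longrightarrow> set (cs i) \<inter> set (cs j) = {}"
    and edge_disjoint:
      "\<And>i j. i \<noteq> j \<Longrightarrow> path_edges (a # cs i @ [b]) \<inter> path_edges (a # cs j @ [b]) = {}"
  shows False
proof -
  define R where "R k = filter (\<lambda>v. v \<in> verts H) (a # cs k @ [b])" for k
  have R_path: "xy_path H (R k) a b" for k
    using xy_path_branch_filter[OF sd paths[of k]] ab unfolding R_def by simp
  have R_set: "set (R k) \<subseteq> insert a (insert b (set (cs k)))" for k unfolding R_def by auto
  have R_disjoint: "set (R i) \<inter> set (R j) \<subseteq> {a, b}" if "i \<noteq> j" for i j
    using R_set[of i] R_set[of j] inner_disjoint[OF that] by blast
  have no_branch: "\<forall>c\<in>set (cs i). c \<notin> verts H" if "R i = R j" "i \<noteq> j" for i j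
  proof (intro ballI notI)
    fix c assume c: "c \<in> set (cs i)" "c \<in> verts H"
    then have "c \<in> set (R i)" unfolding R_def by simp
    then have "c \<in> set (R i) \<inter> set (R j)" using that(1) by simp
    moreover have "distinct (a # cs i @ [b])" using paths[of i] unfolding is_path_def by blast
    then have "c \<notin> {a, b}" using c(1) by auto
    ultimately show False using R_disjoint[OF that(2)] by blast
  qed
  have "inj R"
  proof (rule injI, rule ccontr)
    fix i j assume "R i = R j" "i \<noteq> j"
    have "path_edges (a # cs k @ [b]) \<subseteq> edges G" for k
      using paths[of k] unfolding is_path_def by blast
    then have "{a, hd (cs i @ [b])} = {a, hd (cs j @ [b])}"
      using subdividing_walks_same_first_edge[OF sd ab] no_branch \<open>R i = R j\<close> \<open>i \<noteq> j\<close> by metis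
    then show False
      using edge_disjoint[OF \<open>i \<noteq> j\<close>] first_edge_in_path_edges by (metis disjoint_iff)
  qed
  then have "a \<in> verts H \<and> b \<in> verts H \<and> a \<noteq> b \<and> inj R \<and> (\<forall>n. xy_path H (R n) a b) \<and>
      (\<forall>i j. i \<noteq> j \<longrightarrow> set (R i) \<inter> set (R j) \<subseteq> {a, b})"
    using ab R_path R_disjoint by blast
  then show False using Pi unfolding Pi_graph_def by blast
qed

theorem grain_line_dense_in_subdivided_Pi_graph:
  assumes gl: "grain_line G x y L r P" and sd: "subdivision_map G H \<phi>" and Pi: "Pi_graph H"
  shows "dense_order_on L r"
  unfolding dense_order_on_def
proof (intro ballI impI, rule ccontr)
  fix a b assume ab: "a \<in> L" "b \<in> L" "(a, b) \<in> r \<and> a \<noteq> b"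
    and gap: "\<not> (\<exists>c\<in>L. (a, c) \<in> r \<and> a \<noteq> c \<and> (c, b) \<in> r \<and> c \<noteq> b)"
  obtain N where N: "{a, b} \<subseteq> L_lt L P N"
    using grain_line_L_lt_eventually[OF gl, of "{a, b}"] ab by blast
  have ab_lt: "a \<in> L_lt L P (N + k)" "b \<in> L_lt L P (N + k)" for k
    using N L_lt_mono[of N "N + k" L P] by auto
  have "\<exists>cs as ds. P (N + k) = as @ a # cs @ b # ds" for k
    using grain_line_order[OF gl ab_lt] ab(3) path_le_split by metis
  then obtain cs where "\<And>k. \<exists>as ds. P (N + k) = as @ a # cs k @ b # ds" by metis
  then obtain as ds where split: "\<And>k. P (N + k) = as k @ a # cs k @ b # ds k" by metis
  show False
  proof (rule subdivided_Pi_graph_no_infinite_fan[OF sd Pi])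
    show "a \<in> verts H" "b \<in> verts H" "a \<noteq> b"
      using grain_line_in_branch_vertices[OF gl sd] ab by auto
    show "is_path G (a # cs k @ [b])" for k
      using grain_line_paths[OF gl, of "N + k"] split[of k] is_path_infix[of G "as k" _ "ds k"]
      unfolding xy_path_def by simp
    show "set (cs i) \<inter> set (cs j) = {}" if "i \<noteq> j" for i j
    proof (cases "i < j")
      case True
      then show ?thesis
        using grain_line_gap_segments_disjoint[OF gl _ ab_lt split split gap] by simp
    next
      case False
      then show ?thesis using that
        grain_line_gap_segments_disjoint[OF gl _ ab_lt split split gap, of j i] by auto
    qed
    show "path_edges (a # cs i @ [b]) \<inter> path_edges (a # cs j @ [b]) = {}" if "i \<noteq> j" for i j
      using grain_line_edge_disjoint[OF gl, of "N + i" "N + j"] that split[of i] split[of j]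
        path_edges_infix_subset[of "a # cs i @ [b]" "as i" "ds i"]
        path_edges_infix_subset[of "a # cs j @ [b]" "as j" "ds j"] by auto
  qed
qed

lemma L_lt_subsequence:
  assumes "strict_mono ns"
  shows "L_lt L (P \<circ> ns) n \<subseteq> L_lt L P (ns n)"
  using assms unfolding L_lt_def strict_mono_def by fastforce

lemma grain_line_L_subsequence:
  fixes ns :: "nat \<Rightarrow> nat"
  assumes gl: "grain_line G x y L r P" and ns: "strict_mono ns"
  shows "v \<in> L \<longleftrightarrow> (\<exists>m. {n. v \<in> set ((P \<circ> ns) n)} = {m..})"
proof
  assume "v \<in> L"
  then obtain m where m: "\<And>n. v \<in> set (P n) \<longleftrightarrow> m \<le> n"
    using grain_line_vertex_eventually[OF gl] by blast
  define k where "k = (LEAST k. m \<le> ns k)"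
  have "m \<le> ns m" using strict_mono_imp_increasing[OF ns] .
  then have "m \<le> ns k" unfolding k_def by (rule LeastI)
  have "m \<le> ns n \<longleftrightarrow> k \<le> n" for n
  proof
    assume "m \<le> ns n"
    then show "k \<le> n" unfolding k_def by (rule Least_le)
  next
    assume "k \<le> n"
    then show "m \<le> ns n" using \<open>m \<le> ns k\<close> strict_mono_less_eq[OF ns] by (meson le_trans)
  qed
  then have "{n. v \<in> set ((P \<circ> ns) n)} = {k..}" using m by auto
  then show "\<exists>m. {n. v \<in> set ((P \<circ> ns) n)} = {m..}" by blast
next
  assume "\<exists>m. {n. v \<in> set ((P \<circ> ns) n)} = {m..}"
  then obtain m where "{n. v \<in> set ((P \<circ> ns) n)} = {m..}" by blast
  then have "v \<in> set (P (ns m))" "v \<in> set (P (ns (Suc m)))" by (auto simp: set_eq_iff)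
  moreover have "ns (Suc m) \<noteq> ns m" using ns by (simp add: strict_mono_eq)
  ultimately show "v \<in> L" using grain_line_private_vertex[OF gl] by blast
qed

lemma grain_line_subsequence:
  assumes gl: "grain_line G x y L r P" and ns: "strict_mono ns"
  shows "grain_line G x y L r (P \<circ> ns)"
proof -
  have GL1: "L = {v. \<exists>m. {n. v \<in> set ((P \<circ> ns) n)} = {m..}}"
    using grain_line_L_subsequence[OF gl ns] by blast
  have GL2: "\<forall>n v. v \<in> set ((P \<circ> ns) n) \<and> v \<notin> L \<longrightarrow> (\<forall>m. m \<noteq> n \<longrightarrow> v \<notin> set ((P \<circ> ns) m))"
    using grain_line_private_vertex[OF gl] ns by (auto simp: strict_mono_eq)
  have GL3: "\<forall>n. \<forall>a\<in>L_lt L (P \<circ> ns) n. \<forall>b\<in>L_lt L (P \<circ> ns) n.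
      path_le ((P \<circ> ns) n) a b \<longleftrightarrow> (a, b) \<in> r"
    using L_lt_subsequence[OF ns] grain_line_order[OF gl] by fastforce
  have "\<forall>n. xy_path G ((P \<circ> ns) n) x y" using grain_line_paths[OF gl] by simp
  moreover have "\<forall>i j. i \<noteq> j \<longrightarrow> path_edges ((P \<circ> ns) i) \<inter> path_edges ((P \<circ> ns) j) = {}"
    using grain_line_edge_disjoint[OF gl] ns by (simp add: strict_mono_eq)
  ultimately show ?thesis
    using gl GL1 GL2 GL3 unfolding grain_line_def by (elim conjE) (intro conjI)
qed

lemma dense_grain_line_witnesses_eventually:
  assumes gl: "grain_line G x y L r P" and dense: "dense_order_on L r"
  shows "\<exists>M. \<forall>l\<^sub>1\<in>L_lt L P n. \<forall>l\<^sub>2\<in>L_lt L P n. (l\<^sub>1, l\<^sub>2) \<in> r \<and> l\<^sub>1 \<noteq> l\<^sub>2 \<longrightarrow>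
           (\<exists>c\<in>L_lt L P M. (l\<^sub>1, c) \<in> r \<and> l\<^sub>1 \<noteq> c \<and> (c, l\<^sub>2) \<in> r \<and> c \<noteq> l\<^sub>2)"
proof -
  define between where "between l\<^sub>1 l\<^sub>2 c \<longleftrightarrow> (l\<^sub>1, c) \<in> r \<and> l\<^sub>1 \<noteq> c \<and> (c, l\<^sub>2) \<in> r \<and> c \<noteq> l\<^sub>2"
    for l\<^sub>1 l\<^sub>2 c
  define pairs where "pairs = {(l\<^sub>1, l\<^sub>2) \<in> L_lt L P n \<times> L_lt L P n. (l\<^sub>1, l\<^sub>2) \<in> r \<and> l\<^sub>1 \<noteq> l\<^sub>2}"
  define mid where "mid l\<^sub>1 l\<^sub>2 = (SOME c. c \<in> L \<and> between l\<^sub>1 l\<^sub>2 c)" for l\<^sub>1 l\<^sub>2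
  have mid: "mid l\<^sub>1 l\<^sub>2 \<in> L \<and> between l\<^sub>1 l\<^sub>2 (mid l\<^sub>1 l\<^sub>2)" if "(l\<^sub>1, l\<^sub>2) \<in> pairs" for l\<^sub>1 l\<^sub>2
  proof -
    have "\<exists>c. c \<in> L \<and> between l\<^sub>1 l\<^sub>2 c"
      using that dense unfolding pairs_def between_def dense_order_on_def L_lt_def by blast
    then show ?thesis unfolding mid_def by (rule someI_ex)
  qed
  have "pairs \<subseteq> L_lt L P n \<times> L_lt L P n" unfolding pairs_def by blast
  then have "finite (case_prod mid ` pairs)" using finite_L_lt finite_subset by blast
  moreover have "case_prod mid ` pairs \<subseteq> L" using mid by auto
  ultimately obtain M where M: "case_prod mid ` pairs \<subseteq> L_lt L P M"
    using grain_line_L_lt_eventually[OF gl] by metis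
  have "\<exists>c\<in>L_lt L P M. between l\<^sub>1 l\<^sub>2 c" if "(l\<^sub>1, l\<^sub>2) \<in> pairs" for l\<^sub>1 l\<^sub>2
  proof -
    have "case_prod mid (l\<^sub>1, l\<^sub>2) \<in> case_prod mid ` pairs" using that by (rule imageI)
    then have "mid l\<^sub>1 l\<^sub>2 \<in> L_lt L P M" using M by auto
    then show ?thesis using mid[OF that] by blast
  qed
  then show ?thesis unfolding pairs_def between_def by blast
qed

lemma wildly_presented_subsequence_exists:
  assumes gl: "grain_line G x y L r P" and dense: "dense_order_on L r"
  obtains ns where "strict_mono ns" "wildly_presented L r (P \<circ> ns)"
proof -
  obtain M where M: "\<And>n. \<forall>l\<^sub>1\<in>L_lt L P n. \<forall>l\<^sub>2\<in>L_lt L P n. (l\<^sub>1, l\<^sub>2) \<in> r \<and> l\<^sub>1 \<noteq> l\<^sub>2 \<longrightarrow>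
      (\<exists>c\<in>L_lt L P (M n). (l\<^sub>1, c) \<in> r \<and> l\<^sub>1 \<noteq> c \<and> (c, l\<^sub>2) \<in> r \<and> c \<noteq> l\<^sub>2)"
    using dense_grain_line_witnesses_eventually[OF gl dense] by metis
  define ns where "ns = rec_nat 0 (\<lambda>_ m. max (Suc m) (M (Suc m)))"
  have ns_Suc: "ns (Suc k) = max (Suc (ns k)) (M (Suc (ns k)))" for k unfolding ns_def by simp
  have "strict_mono ns" unfolding strict_mono_Suc_iff ns_Suc by (simp add: less_max_iff_disj)
  moreover have "wildly_presented L r (P \<circ> ns)"
    unfolding wildly_presented_def
  proof (intro allI ballI impI)
    fix n l\<^sub>1 l\<^sub>2 assume l: "l\<^sub>1 \<in> L_lt L (P \<circ> ns) n" "l\<^sub>2 \<in> L_lt L (P \<circ> ns) n"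
      and "(l\<^sub>1, l\<^sub>2) \<in> r \<and> l\<^sub>1 \<noteq> l\<^sub>2"
    obtain k where "n = Suc k" using l(1) unfolding L_lt_def by (cases n) auto
    have "L_lt L (P \<circ> ns) n \<subseteq> L_lt L P (Suc (ns k))"
      using \<open>strict_mono ns\<close> \<open>n = Suc k\<close> unfolding L_lt_def
      by (fastforce simp: less_Suc_eq_le strict_mono_less_eq)
    then have l': "l\<^sub>1 \<in> L_lt L P (Suc (ns k))" "l\<^sub>2 \<in> L_lt L P (Suc (ns k))" using l by blast+
    then obtain c where c: "c \<in> L_lt L P (M (Suc (ns k)))"
      "(l\<^sub>1, c) \<in> r" "l\<^sub>1 \<noteq> c" "(c, l\<^sub>2) \<in> r" "c \<noteq> l\<^sub>2"
      using M \<open>(l\<^sub>1, l\<^sub>2) \<in> r \<and> l\<^sub>1 \<noteq> l\<^sub>2\<close> by blast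
    have "L_lt L P (Suc (ns k)) \<subseteq> L_lt L P (ns n)" "L_lt L P (M (Suc (ns k))) \<subseteq> L_lt L P (ns n)"
      using L_lt_mono[OF max.cobounded1] L_lt_mono[OF max.cobounded2] \<open>n = Suc k\<close> ns_Suc by simp_all
    then have in_L_lt: "c \<in> L_lt L P (ns n)" "l\<^sub>1 \<in> L_lt L P (ns n)" "l\<^sub>2 \<in> L_lt L P (ns n)"
      using c(1) l' by (meson subsetD)+
    then have "path_le (P (ns n)) l\<^sub>1 c" "path_le (P (ns n)) c l\<^sub>2"
      using grain_line_order[OF gl in_L_lt(2,1)] grain_line_order[OF gl in_L_lt(1,3)] c(2,4)
      by simp_all
    then have "c \<in> subpath_verts ((P \<circ> ns) n) l\<^sub>1 l\<^sub>2" unfolding subpath_verts_def by simp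
    moreover have "c \<in> L" using c(1) unfolding L_lt_def by blast
    ultimately show "\<exists>v\<in>subpath_verts ((P \<circ> ns) n) l\<^sub>1 l\<^sub>2.
        v \<in> L \<and> (l\<^sub>1, v) \<in> r \<and> v \<noteq> l\<^sub>1 \<and> (v, l\<^sub>2) \<in> r \<and> v \<noteq> l\<^sub>2"
      using c(2-5) by auto
  qed
  ultimately show thesis by (rule that)
qed

lemma grain_line_endpoints:
  "grain_line G x y L r P \<Longrightarrow>
    countable L \<and> linear_order_on L r \<and> x \<in> L \<and> y \<in> L \<and> x \<noteq> y \<and>
    (\<forall>l\<in>L. (x, l) \<in> r) \<and> (\<forall>l\<in>L. (l, y) \<in> r)"
  unfolding grain_line_def by (elim conjE) (intro conjI)

theorem lemma5p5:
  fixes G :: "'a graph" and x y :: 'a and L :: "'a set" and r :: "'a rel"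
    and P :: "nat \<Rightarrow> 'a list"
  assumes "subdivided_Pi_graph G"
    and "grain_line G x y L r P"
  shows "wild L r \<and>
         (\<exists>ns :: nat \<Rightarrow> nat. strict_mono ns \<and> grain_line G x y L r (P \<circ> ns) \<and>
                              wildly_presented L r (P \<circ> ns))"
proof -
  obtain H where H: "Pi_graph H" "subdivision_of G H"
    using assms(1) unfolding subdivided_Pi_graph_def by blast
  obtain \<phi> where "subdivision_map G H \<phi>" by (rule subdivision_map_exists[OF H(2)])
  then have dense: "dense_order_on L r"
    by (rule grain_line_dense_in_subdivided_Pi_graph[OF assms(2) _ H(1)])
  have "wild L r"
    using grain_line_endpoints[OF assms(2)]
    by (elim conjE) (rule wild_if_dense_order_with_endpoints[OF _ _ dense])
  moreover obtain ns where "strict_mono ns" "wildly_presented L r (P \<circ> ns)"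
    using wildly_presented_subsequence_exists[OF assms(2) dense] by blast
  ultimately show ?thesis using grain_line_subsequence[OF assms(2)] by blast
qed

end
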